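(* Let $k\ge 0$ be an integer, $N_o=2^k$, and let $\mathbf{P}_k=\mathbf{P}^{\otimes k}$ be the $k$-th Kronecker power of $\mathbf{P}=\begin{bmatrix}1&0\\1&1\end{bmatrix}$ over $\mathrm{GF}(2)$ (with $\mathbf{P}_0=[1]$). Let $\mathbf{c}=(c_0,\dots,c_m)\in\{0,1\}^{m+1}$ with $c_0=1$, and fix an arbitrary initial shift-register state $\mathbf{s}=(s_0,\dots,s_{m-1})\in\{0,1\}^m$. For $b\in\{0,1\}$, let $\mathbf{v}^{(b)}=(v_0,\dots,v_{N_o-1})$ be the message vector with $v_0=\dots=v_{N_o-2}=0$ and $v_{N_o-1}=b$, let $\mathbf{u}^{(b)}$ be its convolutional encoding with impulse response $\mathbf{c}$ starting from state $\mathbf{s}$, and let $\boldsymbol{\beta}_b=\mathbf{u}^{(b)}\mathbf{P}_k$. Then $\boldsymbol{\beta}_0\oplus\boldsymbol{\beta}_1=\mathbf{1}$, the all-ones vector of length $N_o$.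
   Context: All arithmetic is over $\mathrm{GF}(2)$; vectors are row vectors and rows/columns of $\mathbf{P}_k$ are indexed $0,\dots,N_o-1$. Convolutional encoding of $\mathbf{v}=(v_0,\dots,v_{N_o-1})$ with impulse response $\mathbf{c}$ from state $\mathbf{s}$ is defined sequentially for $i=0,\dots,N_o-1$: $u_i = c_0 v_i \oplus \bigoplus_{j=1}^{m} c_j s_{j-1}$, after which the state is updated to $\mathbf{s}\leftarrow(v_i,s_0,\dots,s_{m-2})$. (This setting is a "Rev node" of a polarization-adjusted convolutional code: the first $N_o-1$ message bits are frozen to zero and only the last one is an information bit.) *)

theory Defs
  imports Main
begin

text \<open>GF(2) is modelled by bool: True = 1, False = 0, addition is (\<noteq>) (xor),
  multiplication is conjunction.\<close>

definition gf2_sum :: "bool list \<Rightarrow> bool" where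
  "gf2_sum xs = foldr (\<lambda>a b. a \<noteq> b) xs False"

text \<open>The kernel P = [[1,0],[1,1]], indexed from 0.\<close>
definition P_ker :: "nat \<Rightarrow> nat \<Rightarrow> bool" where
  "P_ker i j = (i = 1 \<or> j = 0)"

text \<open>Kronecker power P_k = P^{\<otimes>k} as a 2^k x 2^k matrix (entries for i,j < 2^k);
  P_0 = [1], P_(k+1) = P \<otimes> P_k.\<close>
fun kron_pow :: "nat \<Rightarrow> nat \<Rightarrow> nat \<Rightarrow> bool" where
  "kron_pow 0 i j = True"
| "kron_pow (Suc k) i j =
     (P_ker (i div 2^k) (j div 2^k) \<and> kron_pow k (i mod 2^k) (j mod 2^k))"

definition vec_mat :: "bool list \<Rightarrow> (nat \<Rightarrow> nat \<Rightarrow> bool) \<Rightarrow> nat \<Rightarrow> bool list" where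
  "vec_mat u M n = map (\<lambda>j. gf2_sum (map (\<lambda>i. u ! i \<and> M i j) [0..<n])) [0..<n]"

text \<open>Convolutional encoding with impulse response c = (c_0,...,c_m) (a list of length m+1)
  from state s = (s_0,...,s_{m-1}) (a list of length m):
  u_i = c_0 v_i + sum_{j=1}^m c_j s_{j-1}, then s := (v_i, s_0, ..., s_{m-2}).\<close>
fun conv_enc :: "bool list \<Rightarrow> bool list \<Rightarrow> bool list \<Rightarrow> bool list" where
  "conv_enc c s [] = []"
| "conv_enc c s (v # vs) =
     gf2_sum ((c ! 0 \<and> v) # map (\<lambda>j. c ! j \<and> s ! (j - 1)) [1..<length c])
     # conv_enc c (take (length s) (v # s)) vs"

end

theory Submission
  imports Defs
begin

text \<open>Both messages drive the shift register through the same states up to the last step, and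
  c_0 = 1, so the two codewords differ exactly in their last bit. By linearity the difference
  of the two transforms is therefore the last row of P_k, which consists of ones only.\<close>

lemma gf2_sum_Cons [simp]: "gf2_sum (a # xs) = (a \<noteq> gf2_sum xs)"
  by (simp add: gf2_sum_def)

lemma gf2_sum_Nil [simp]: "gf2_sum [] = False"
  by (simp add: gf2_sum_def)

lemma gf2_sum_map_xor:
  "gf2_sum (map (\<lambda>i. f i \<noteq> g i) xs) = (gf2_sum (map f xs) \<noteq> gf2_sum (map g xs))"
  by (induction xs) auto

lemma gf2_sum_replicate_False_snoc: "gf2_sum (replicate n False @ [x]) = x"
  by (induction n) auto

lemma length_vec_mat [simp]: "length (vec_mat u M n) = n"
  by (simp add: vec_mat_def)

lemma vec_mat_map2_xor:
  assumes "length u = n" and "length w = n"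
  shows "map2 (\<noteq>) (vec_mat u M n) (vec_mat w M n) = vec_mat (map2 (\<noteq>) u w) M n"
proof (rule nth_equalityI)
  fix j assume "j < length (map2 (\<noteq>) (vec_mat u M n) (vec_mat w M n))"
  then have "j < n" by simp
  have "map (\<lambda>i. map2 (\<noteq>) u w ! i \<and> M i j) [0..<n]
      = map (\<lambda>i. (u ! i \<and> M i j) \<noteq> (w ! i \<and> M i j)) [0..<n]"
    using assms by (intro map_cong) auto
  then have "vec_mat (map2 (\<noteq>) u w) M n ! j
      = (gf2_sum (map (\<lambda>i. u ! i \<and> M i j) [0..<n]) \<noteq> gf2_sum (map (\<lambda>i. w ! i \<and> M i j) [0..<n]))"
    using \<open>j < n\<close> by (simp only: vec_mat_def nth_map length_upt diff_zero nth_upt add_0 gf2_sum_map_xor)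
  then show "map2 (\<noteq>) (vec_mat u M n) (vec_mat w M n) ! j = vec_mat (map2 (\<noteq>) u w) M n ! j"
    using \<open>j < n\<close> by (simp add: vec_mat_def)
qed simp

lemma vec_mat_last_unit:
  "vec_mat (replicate n False @ [True]) M (Suc n) = map (M n) [0..<Suc n]"
proof -
  have "map (\<lambda>i. (replicate n False @ [True]) ! i \<and> M i j) [0..<Suc n]
      = replicate n False @ [M n j]" for j
    by (rule nth_equalityI) (auto simp: nth_append)
  then show ?thesis
    by (simp add: vec_mat_def gf2_sum_replicate_False_snoc del: upt_Suc)
qed

lemma kron_pow_last_row: "kron_pow k (2 ^ k - 1) j"
proof (induction k arbitrary: j)
  case (Suc k)
  have high: "(2 ^ Suc k - 1) div 2 ^ k = (1 :: nat)"
    and low: "(2 ^ Suc k - 1) mod 2 ^ k = (2 ^ k - 1 :: nat)"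
    by (simp_all add: div_if mod_if)
  show ?case
    unfolding kron_pow.simps high low P_ker_def using Suc by simp
qed simp

lemma length_conv_enc [simp]: "length (conv_enc c s xs) = length xs"
  by (induction xs arbitrary: s) auto

lemma conv_enc_snoc_xor:
  assumes "c ! 0"
  shows "map2 (\<noteq>) (conv_enc c s (xs @ [a])) (conv_enc c s (xs @ [b]))
       = replicate (length xs) False @ [a \<noteq> b]"
  using assms by (induction xs arbitrary: s) auto

theorem theorem1:
  fixes k m :: nat and c s :: "bool list"
  assumes "length c = m + 1" and "c ! 0" and "length s = m"
  shows "let N = 2 ^ k;
             v = (\<lambda>b. replicate (N - 1) False @ [b]);
             \<beta> = (\<lambda>b. vec_mat (conv_enc c s (v b)) (kron_pow k) N)
         in map2 (\<noteq>) (\<beta> False) (\<beta> True) = replicate N True"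
proof -
  define n :: nat where "n = 2 ^ k - 1"
  have N: "2 ^ k = Suc n"
    by (simp add: n_def)
  let ?u = "\<lambda>b. conv_enc c s (replicate n False @ [b])"
  have "map2 (\<noteq>) (vec_mat (?u False) (kron_pow k) (Suc n)) (vec_mat (?u True) (kron_pow k) (Suc n))
      = vec_mat (map2 (\<noteq>) (?u False) (?u True)) (kron_pow k) (Suc n)"
    by (rule vec_mat_map2_xor) simp_all
  also have "\<dots> = vec_mat (replicate n False @ [True]) (kron_pow k) (Suc n)"
    unfolding conv_enc_snoc_xor[OF \<open>c ! 0\<close>] by simp
  also have "\<dots> = replicate (Suc n) True"
  proof -
    have "kron_pow k n = (\<lambda>_. True)"
      using kron_pow_last_row by (auto simp: n_def)
    then show ?thesis
      by (simp add: vec_mat_last_unit map_replicate_const del: upt_Suc)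
  qed
  finally show ?thesis
    by (simp add: N)
qed

end
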